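(* Let $\mathcal{T}$ be a finite tree, $w:V(\mathcal{T})\to\mathbb{R}_{\ge0}$, $m=w(\mathcal{T})$, $\alpha\in[\tfrac13,\tfrac12]$, and let $c$ be an $\alpha$-centroid of $(\mathcal{T},w)$. Then $$\mathtt{OPT}(\mathcal{T},w)\ge(2-3\alpha)m+(3\alpha-1)w(c)+\sum_{\mathcal{H}\in\mathbb{C}(\mathcal{T}-c)}\mathtt{OPT}(\mathcal{H},w).$$
   Context: $\mathbb{C}(G)$ denotes the set of connected components of a graph $G$. For a subgraph $\mathcal{H}$, $w(\mathcal{H})=\sum_{x\in V(\mathcal{H})}w(x)$, and $w$ also denotes its restriction to $V(\mathcal{H})$. A search tree on a tree $\mathcal{T}$ is a rooted tree $T$ with vertex set $V(\mathcal{T})$ defined recursively: its root is an arbitrary vertex $r$, and the children of $r$ are the roots of search trees built on the connected components of $\mathcal{T}-r$; a single-vertex tree has only itself as search tree. $\mathtt{cost}_w(T)=\sum_x w(x)\,\mathtt{depth}_T(x)$ with root depth $1$; $\mathtt{OPT}(\mathcal{T},w)$ is the minimum cost over all search trees on $\mathcal{T}$. A vertex $v$ is an $\alpha$-centroid of $(\mathcal{T},w)$ if every component $\mathcal{H}$ of $\mathcal{T}-v$ has $w(\mathcal{H})\le\alpha\,w(\mathcal{T})$. *)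

theory Defs
  imports Complex_Main
begin

text \<open>Graphs: a symmetric irreflexive edge relation E on vertices of type 'a; a
  (sub)graph is given by its finite vertex set S, taking the subgraph induced by E.\<close>

definition reach_in :: "('a \<Rightarrow> 'a \<Rightarrow> bool) \<Rightarrow> 'a set \<Rightarrow> 'a \<Rightarrow> 'a \<Rightarrow> bool" where
  "reach_in E S = (\<lambda>x y. E x y \<and> x \<in> S \<and> y \<in> S)\<^sup>*\<^sup>*"

definition connected_in :: "('a \<Rightarrow> 'a \<Rightarrow> bool) \<Rightarrow> 'a set \<Rightarrow> bool" where
  "connected_in E S \<longleftrightarrow> (\<forall>x\<in>S. \<forall>y\<in>S. reach_in E S x y)"

definition comps :: "('a \<Rightarrow> 'a \<Rightarrow> bool) \<Rightarrow> 'a set \<Rightarrow> 'a set set" where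
  "comps E S = (\<lambda>x. {y. reach_in E S x y}) ` S"

definition has_cycle_in :: "('a \<Rightarrow> 'a \<Rightarrow> bool) \<Rightarrow> 'a set \<Rightarrow> bool" where
  "has_cycle_in E S \<longleftrightarrow> (\<exists>vs. length vs \<ge> 3 \<and> distinct vs \<and> set vs \<subseteq> S \<and>
      (\<forall>i < length vs - 1. E (vs ! i) (vs ! Suc i)) \<and> E (last vs) (hd vs))"

definition is_tree :: "('a \<Rightarrow> 'a \<Rightarrow> bool) \<Rightarrow> 'a set \<Rightarrow> bool" where
  "is_tree E S \<longleftrightarrow> finite S \<and> S \<noteq> {} \<and> connected_in E S \<and> \<not> has_cycle_in E S"

datatype 'a stree = Node 'a "'a stree list"

fun svs :: "'a stree \<Rightarrow> 'a set" where
  "svs (Node r ts) = insert r (\<Union>t\<in>set ts. svs t)"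

inductive is_search_tree :: "('a \<Rightarrow> 'a \<Rightarrow> bool) \<Rightarrow> 'a set \<Rightarrow> 'a stree \<Rightarrow> bool" where
  "\<lbrakk> r \<in> S; distinct (map svs ts); set (map svs ts) = comps E (S - {r});
     \<forall>t\<in>set ts. is_search_tree E (svs t) t \<rbrakk> \<Longrightarrow> is_search_tree E S (Node r ts)"

text \<open>Vertices with their depths (root has depth 1).\<close>
fun depths :: "'a stree \<Rightarrow> ('a \<times> nat) list" where
  "depths (Node r ts) = (r, 1) # concat (map (\<lambda>t. map (\<lambda>(x, d). (x, Suc d)) (depths t)) ts)"

definition cost :: "('a \<Rightarrow> real) \<Rightarrow> 'a stree \<Rightarrow> real" where
  "cost w T = sum_list (map (\<lambda>(x, d). w x * real d) (depths T))"

definition OPT :: "('a \<Rightarrow> 'a \<Rightarrow> bool) \<Rightarrow> 'a set \<Rightarrow> ('a \<Rightarrow> real) \<Rightarrow> real" where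
  "OPT E S w = Inf {cost w T | T. is_search_tree E S T}"

definition wsum :: "('a \<Rightarrow> real) \<Rightarrow> 'a set \<Rightarrow> real" where
  "wsum w S = (\<Sum>x\<in>S. w x)"

definition is_centroid :: "real \<Rightarrow> ('a \<Rightarrow> 'a \<Rightarrow> bool) \<Rightarrow> 'a set \<Rightarrow> ('a \<Rightarrow> real) \<Rightarrow> 'a \<Rightarrow> bool" where
  "is_centroid \<alpha> E S w v \<longleftrightarrow> v \<in> S \<and> (\<forall>H \<in> comps E (S - {v}). wsum w H \<le> \<alpha> * wsum w S)"

end

theory Submission
  imports Defs
begin

text \<open>Write \<open>cost T = \<Sum>x. w x * |ancestors T x|\<close>. For a component \<open>H\<close> of \<open>V - {c}\<close>, the
  ancestors of \<open>x \<in> H\<close> inside \<open>H\<close> are its depth in the search tree that \<open>T\<close> induces on \<open>H\<close>, so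
  these terms cost at least \<open>OPT H\<close>. What remains is the depth of \<open>c\<close> and, for \<open>x \<in> H\<close>, the
  ancestors of \<open>x\<close> outside \<open>H\<close>. If the root is \<open>c\<close>, every vertex has such an ancestor, which
  already gives \<open>w(V)\<close>. Otherwise the root \<open>r\<close> lies in a component \<open>H1\<close>; as every component is
  attached to \<open>c\<close>, the set \<open>V - H1\<close> is connected, so the root \<open>a\<close> of the subtree below \<open>r\<close>
  containing \<open>c\<close> is an ancestor of all of \<open>V - H1\<close>. Counting \<open>r\<close> and \<open>a\<close>, and bounding the
  weight of the at most two components containing them by \<open>\<alpha> w(V)\<close>, gives the claim.\<close>

section \<open>Reachability and components\<close>

lemma reach_in_refl [simp]: "reach_in E S x x"
  by (simp add: reach_in_def)

lemma reach_in_step: "reach_in E S x y \<Longrightarrow> E y z \<Longrightarrow> y \<in> S \<Longrightarrow> z \<in> S \<Longrightarrow> reach_in E S x z"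
  unfolding reach_in_def by (simp add: rtranclp.rtrancl_into_rtrancl)

lemma reach_in_trans: "reach_in E S x y \<Longrightarrow> reach_in E S y z \<Longrightarrow> reach_in E S x z"
  unfolding reach_in_def by (rule rtranclp_trans)

lemma reach_in_mono: "S \<subseteq> S' \<Longrightarrow> reach_in E S x y \<Longrightarrow> reach_in E S' x y"
  unfolding reach_in_def by (erule rtranclp.induct) (auto intro: rtranclp.rtrancl_into_rtrancl)

lemma reach_in_mem: "reach_in E S x y \<Longrightarrow> y \<noteq> x \<Longrightarrow> y \<in> S"
  unfolding reach_in_def by (induction rule: rtranclp_induct) auto

lemma reach_in_induct [consumes 1, case_names base step]:
  assumes "reach_in E S x y" and "P x"
    and "\<And>y z. reach_in E S x y \<Longrightarrow> P y \<Longrightarrow> E y z \<Longrightarrow> y \<in> S \<Longrightarrow> z \<in> S \<Longrightarrow> P z"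
  shows "P y"
  using assms(1) unfolding reach_in_def
proof (induction rule: rtranclp_induct)
  case (step y z)
  then show ?case using assms(3)[of y z] by (simp add: reach_in_def)
qed (use assms(2) in simp)

definition component :: "('a \<Rightarrow> 'a \<Rightarrow> bool) \<Rightarrow> 'a set \<Rightarrow> 'a \<Rightarrow> 'a set" where
  "component E S x = {y. reach_in E S x y}"

lemma comps_eq_image_component: "comps E S = component E S ` S"
  by (simp add: comps_def component_def)

lemma component_self [simp]: "x \<in> component E S x"
  by (simp add: component_def)

lemma component_subset: "x \<in> S \<Longrightarrow> component E S x \<subseteq> S"
  by (auto simp: component_def dest: reach_in_mem)

lemma component_in_comps: "x \<in> S \<Longrightarrow> component E S x \<in> comps E S"
  by (simp add: comps_eq_image_component)

lemma finite_comps: "finite S \<Longrightarrow> finite (comps E S)"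
  by (simp add: comps_def)

lemma comps_subset: "K \<in> comps E S \<Longrightarrow> K \<subseteq> S"
  by (auto simp: comps_eq_image_component dest: component_subset)

lemma comps_nonempty: "K \<in> comps E S \<Longrightarrow> K \<noteq> {}"
  by (metis comps_eq_image_component component_self empty_iff imageE)

lemma Union_comps: "\<Union>(comps E S) = S"
  using comps_subset by (blast intro: component_in_comps component_self)

lemma comps_empty [simp]: "comps E {} = {}"
  by (simp add: comps_def)

lemma comps_closed: "K \<in> comps E S \<Longrightarrow> x \<in> K \<Longrightarrow> y \<in> S \<Longrightarrow> E x y \<Longrightarrow> y \<in> K"
  using comps_subset[of K E S] by (auto simp: comps_eq_image_component component_def intro: reach_in_step)

lemma connected_subset_component:
  "connected_in E Z \<Longrightarrow> Z \<subseteq> S \<Longrightarrow> z \<in> Z \<Longrightarrow> Z \<subseteq> component E S z"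
  by (auto simp: connected_in_def component_def intro: reach_in_mono)

locale symmetric_graph =
  fixes E :: "'a \<Rightarrow> 'a \<Rightarrow> bool"
  assumes sym: "\<And>x y. E x y \<Longrightarrow> E y x"
begin

lemma reach_in_sym: "reach_in E S x y \<Longrightarrow> reach_in E S y x"
  unfolding reach_in_def
proof (induction rule: rtranclp_induct)
  case (step y z)
  then show ?case by (metis (mono_tags, lifting) converse_rtranclp_into_rtranclp sym)
qed simp

lemma component_eq: "y \<in> component E S x \<Longrightarrow> component E S y = component E S x"
  unfolding component_def by (blast intro: reach_in_trans reach_in_sym)

lemma comps_disjoint: "K \<in> comps E S \<Longrightarrow> K' \<in> comps E S \<Longrightarrow> K \<noteq> K' \<Longrightarrow> K \<inter> K' = {}"
  by (auto simp: comps_eq_image_component dest: component_eq)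

lemma connected_component: "connected_in E (component E S x)"
proof -
  have "reach_in E (component E S x) x y" if "reach_in E S x y" for y
    using that
  proof (induction rule: reach_in_induct)
    case (step y z)
    then show ?case by (auto simp: component_def intro: reach_in_step reach_in_trans)
  qed simp
  then show ?thesis
    unfolding connected_in_def component_def by (blast intro: reach_in_sym reach_in_trans)
qed

lemma comps_connected: "K \<in> comps E S \<Longrightarrow> connected_in E K"
  by (auto simp: comps_eq_image_component intro: connected_component)

lemma comps_of_connected: "connected_in E H \<Longrightarrow> H \<noteq> {} \<Longrightarrow> comps E H = {H}"
proof -
  assume con: "connected_in E H" and ne: "H \<noteq> {}"
  have "component E H x = H" if "x \<in> H" for x
    using component_subset[OF that] connected_subset_component[OF con _ that] by blast
  then show ?thesis using ne by (auto simp: comps_eq_image_component)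
qed

lemma component_Int_component:
  assumes "Y \<subseteq> S" "y \<in> Y"
  shows "component E Y y = component E (Y \<inter> component E S y) y"
proof
  show "component E (Y \<inter> component E S y) y \<subseteq> component E Y y"
    by (auto simp: component_def intro: reach_in_mono)
next
  have "reach_in E (Y \<inter> component E S y) y z" if "reach_in E Y y z" for z
    using that
  proof (induction rule: reach_in_induct)
    case (step u v)
    have "reach_in E S y u"
      using reach_in_mem[OF step.IH] reach_in_mono[OF _ step.hyps(1)] assms(1)
      by (cases "u = y") (auto simp: component_def)
    then have "reach_in E S y v"
      using step assms(1) by (auto intro: reach_in_step)
    then show ?case
      using step \<open>reach_in E S y u\<close> by (auto simp: component_def intro: reach_in_step)
  qed simp
  then show "component E Y y \<subseteq> component E (Y \<inter> component E S y) y"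
    by (auto simp: component_def)
qed

lemma comps_subset_eq_UNION:
  assumes "Y \<subseteq> S"
  shows "comps E Y = (\<Union>C\<in>comps E S. comps E (Y \<inter> C))"
proof (intro equalityI subsetI)
  fix K assume "K \<in> comps E Y"
  then obtain y where y: "y \<in> Y" "K = component E Y y"
    by (auto simp: comps_eq_image_component)
  then have "K \<in> comps E (Y \<inter> component E S y)"
    using component_Int_component[OF assms y(1)] by (auto simp: comps_eq_image_component)
  moreover have "component E S y \<in> comps E S"
    using assms y by (auto intro: component_in_comps)
  ultimately show "K \<in> (\<Union>C\<in>comps E S. comps E (Y \<inter> C))" by blast
next
  fix K assume "K \<in> (\<Union>C\<in>comps E S. comps E (Y \<inter> C))"
  then obtain C y where C: "C \<in> comps E S" and y: "y \<in> Y \<inter> C" "K = component E (Y \<inter> C) y"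
    by (auto simp: comps_eq_image_component)
  then have "component E S y = C"
    by (auto simp: comps_eq_image_component dest: component_eq)
  then show "K \<in> comps E Y"
    using y component_Int_component[OF assms] by (auto simp: comps_eq_image_component)
qed

lemma comps_Diff_comp:
  assumes K: "K \<in> comps E S"
  shows "comps E (S - K) = comps E S - {K}"
proof -
  have "comps E ((S - K) \<inter> C) = (if C = K then {} else {C})" if C: "C \<in> comps E S" for C
  proof (cases "C = K")
    case False
    then have "(S - K) \<inter> C = C" using comps_disjoint[OF C K] comps_subset[OF C] by blast
    then show ?thesis
      using False comps_of_connected[OF comps_connected[OF C] comps_nonempty[OF C]] by simp
  qed (simp add: Int_commute)
  then have "comps E (S - K) = (\<Union>C\<in>comps E S. if C = K then {} else {C})"
    using comps_subset_eq_UNION[of "S - K" S] by auto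
  then show ?thesis by auto
qed

lemma sum_wsum_comps:
  assumes "finite S"
  shows "(\<Sum>K\<in>comps E S. wsum w K) = wsum w S"
proof -
  have "sum w (\<Union>(comps E S)) = (\<Sum>K\<in>comps E S. sum w K)"
    using assms comps_subset[of _ E S] comps_disjoint[of _ S]
    by (subst sum.Union_disjoint) (auto intro: finite_subset)
  then show ?thesis by (simp add: Union_comps wsum_def)
qed

lemma comps_Diff_adjacent:
  assumes con: "connected_in E V" and c: "c \<in> V" and H: "H \<in> comps E (V - {c})"
  shows "\<exists>h\<in>H. E h c"
proof (rule ccontr)
  assume no_edge: "\<not> (\<exists>h\<in>H. E h c)"
  obtain x where x: "x \<in> H" using comps_nonempty[OF H] by blast
  have "y \<in> H" if "reach_in E V x y" for y
    using that
  proof (induction rule: reach_in_induct)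
    case (step y z)
    then show ?case using no_edge comps_closed[OF H] by blast
  qed (fact x)
  moreover have "reach_in E V x c"
    using con c x comps_subset[OF H] unfolding connected_in_def by blast
  ultimately show False using comps_subset[OF H] by blast
qed

lemma connected_Diff_comps:
  assumes con: "connected_in E V" and c: "c \<in> V" and H: "H \<in> comps E (V - {c})"
  shows "connected_in E (V - H)"
proof -
  have to_c: "reach_in E (V - H) z c" if z: "z \<in> V - H" for z
  proof (cases "z = c")
    case False
    then obtain H' where H': "H' \<in> comps E (V - {c})" "z \<in> H'"
      using z Union_comps[of E "V - {c}"] by blast
    then have "H' \<noteq> H" using z by blast
    then have H'_sub: "H' \<subseteq> V - H"
      using comps_disjoint[OF H'(1) H] comps_subset[OF H'(1)] by blast
    obtain h where h: "h \<in> H'" "E h c" using comps_Diff_adjacent[OF con c H'(1)] by blast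
    have "reach_in E H' z h"
      using comps_connected[OF H'(1)] H'(2) h(1) unfolding connected_in_def by blast
    then have "reach_in E (V - H) z h" using H'_sub by (rule reach_in_mono[rotated])
    moreover have "c \<in> V - H" using c comps_subset[OF H] by blast
    ultimately show ?thesis using reach_in_step[where E=E, OF _ h(2)] h(1) H'_sub by blast
  qed simp
  show ?thesis
    unfolding connected_in_def
    using to_c reach_in_sym[OF to_c] reach_in_trans by meson
qed

end

section \<open>Search trees\<close>

text \<open>Unlike \<open>is_search_tree.induct\<close>, this rule keeps the graph \<open>E\<close> fixed, so that it can be used
  inside a locale fixing \<open>E\<close>.\<close>
lemma search_tree_induct [consumes 1, case_names Node]:
  assumes "is_search_tree E S T"
    and "\<And>r S ts. is_search_tree E S (Node r ts) \<Longrightarrow> (\<And>t. t \<in> set ts \<Longrightarrow> P (svs t) t)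
           \<Longrightarrow> P S (Node r ts)"
  shows "P S T"
proof -
  have "E' = E \<longrightarrow> P S T" if "is_search_tree E' S T" for E'
    using that
  proof (induction rule: is_search_tree.induct)
    case (1 r S ts E')
    show ?case
    proof
      assume "E' = E"
      with 1 show "P S (Node r ts)"
        by (intro assms(2)) (auto intro: is_search_tree.intros)
    qed
  qed
  then show ?thesis using assms(1) by blast
qed

inductive_cases search_tree_NodeE: "is_search_tree E S (Node r ts)"

lemma search_tree_root: "is_search_tree E S (Node r ts) \<Longrightarrow> r \<in> S"
  by (erule search_tree_NodeE)

lemma search_tree_children: "is_search_tree E S (Node r ts) \<Longrightarrow> t \<in> set ts \<Longrightarrow> is_search_tree E (svs t) t"
  by (erule search_tree_NodeE) blast

lemma search_tree_children_comps: "is_search_tree E S (Node r ts) \<Longrightarrow> svs ` set ts = comps E (S - {r})"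
  by (erule search_tree_NodeE) simp

lemma search_tree_children_distinct:
  "is_search_tree E S (Node r ts) \<Longrightarrow> distinct ts \<and> inj_on svs (set ts)"
  by (erule search_tree_NodeE) (simp add: distinct_map)

lemma search_tree_svs: "is_search_tree E S T \<Longrightarrow> svs T = S"
proof (induction rule: search_tree_induct)
  case (Node r S ts)
  then show ?case
    using search_tree_root[OF Node.hyps] search_tree_children_comps[OF Node.hyps]
      Union_comps[of E "S - {r}"] by auto
qed

lemma finite_svs [simp]: "finite (svs t)"
  by (induction t) auto

lemma search_tree_finite: "is_search_tree E S T \<Longrightarrow> finite S"
  using search_tree_svs finite_svs by metis

lemma search_tree_child_subset: "is_search_tree E S (Node r ts) \<Longrightarrow> t \<in> set ts \<Longrightarrow> svs t \<subseteq> S - {r}"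
  using search_tree_children_comps[of E S r ts] comps_subset[of "svs t" E "S - {r}"] by blast

lemma search_tree_root_notin_children: "is_search_tree E S (Node r ts) \<Longrightarrow> r \<notin> (\<Union>t\<in>set ts. svs t)"
  using search_tree_child_subset[of E S r ts] by blast

lemma search_tree_NodeI:
  assumes "r \<in> S" "finite S" and f: "\<And>K. K \<in> comps E (S - {r}) \<Longrightarrow> is_search_tree E K (f K)"
  obtains Ks where "distinct Ks" "set Ks = comps E (S - {r})" "is_search_tree E S (Node r (map f Ks))"
proof -
  obtain Ks where Ks: "set Ks = comps E (S - {r})" "distinct Ks"
    using finite_distinct_list[OF finite_comps[of "S - {r}" E]] assms(2) by auto
  have "map svs (map f Ks) = Ks"
    unfolding map_map by (rule map_idI) (use Ks(1) f search_tree_svs in fastforce)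
  moreover have "\<forall>t\<in>set (map f Ks). is_search_tree E (svs t) t"
    using Ks(1) f search_tree_svs by fastforce
  ultimately have "is_search_tree E S (Node r (map f Ks))"
    using assms(1) Ks by (intro is_search_tree.intros) auto
  then show thesis using Ks that by blast
qed

lemma search_tree_exists: "finite S \<Longrightarrow> S \<noteq> {} \<Longrightarrow> \<exists>T. is_search_tree E S T"
proof (induction "card S" arbitrary: S rule: less_induct)
  case less
  obtain r where r: "r \<in> S" using less.prems by blast
  have "\<exists>T. is_search_tree E K T" if K: "K \<in> comps E (S - {r})" for K
  proof -
    have "K \<subset> S" using comps_subset[OF K] r by blast
    then show ?thesis
      using less psubset_card_mono finite_subset comps_nonempty[OF K] by (metis psubset_imp_subset)
  qed
  then obtain f where "\<And>K. K \<in> comps E (S - {r}) \<Longrightarrow> is_search_tree E K (f K)" by metis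
  then show ?case using search_tree_NodeI[OF r less.prems(1)] by metis
qed

context symmetric_graph
begin

lemma search_tree_children_disjoint:
  assumes "is_search_tree E S (Node r ts)" "t \<in> set ts" "t' \<in> set ts" "t \<noteq> t'"
  shows "svs t \<inter> svs t' = {}"
  using search_tree_children_distinct[OF assms(1)] search_tree_children_comps[OF assms(1)] assms(2-4)
    comps_disjoint by (metis image_eqI inj_on_contraD)

lemma wsum_search_tree_Node:
  assumes T: "is_search_tree E S (Node r ts)"
  shows "wsum w S = w r + (\<Sum>t\<in>set ts. wsum w (svs t))"
proof -
  have "(\<Sum>t\<in>set ts. wsum w (svs t)) = (\<Sum>K\<in>svs ` set ts. wsum w K)"
    using search_tree_children_distinct[OF T] by (simp add: sum.reindex)
  also have "\<dots> = (\<Sum>K\<in>comps E (S - {r}). wsum w K)"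
    by (simp add: search_tree_children_comps[OF T])
  also have "\<dots> = wsum w (S - {r})"
    using search_tree_finite[OF T] by (simp add: sum_wsum_comps)
  finally show ?thesis
    using sum.remove[OF search_tree_finite[OF T] search_tree_root[OF T]] by (simp add: wsum_def)
qed

lemma sum_comps_search_tree_children:
  assumes T: "is_search_tree E S (Node r ts)" and Y: "Y \<subseteq> S - {r}"
  shows "(\<Sum>K\<in>comps E Y. g K) = (\<Sum>t\<in>set ts. \<Sum>K\<in>comps E (Y \<inter> svs t). g K)"
proof -
  have "comps E Y = (\<Union>t\<in>set ts. comps E (Y \<inter> svs t))"
    unfolding comps_subset_eq_UNION[OF Y] search_tree_children_comps[OF T, symmetric] by simp
  moreover have "comps E (Y \<inter> svs t) \<inter> comps E (Y \<inter> svs t') = {}"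
    if "t \<in> set ts" "t' \<in> set ts" "t \<noteq> t'" for t t'
    using search_tree_children_disjoint[OF T that] comps_subset comps_nonempty by blast
  ultimately show ?thesis
    by (simp add: sum.UNION_disjoint finite_comps)
qed

end

fun ancestors :: "'a stree \<Rightarrow> 'a \<Rightarrow> 'a set" where
  "ancestors (Node r ts) x = (if x \<in> svs (Node r ts) then insert r (\<Union>t\<in>set ts. ancestors t x) else {})"

lemma ancestors_subset: "ancestors t x \<subseteq> svs t"
  by (induction t) auto

lemma finite_ancestors [simp]: "finite (ancestors t x)"
  using ancestors_subset finite_svs finite_subset by metis

lemma ancestors_notin: "x \<notin> svs t \<Longrightarrow> ancestors t x = {}"
  by (cases t) auto

lemma ancestors_self: "x \<in> svs t \<Longrightarrow> x \<in> ancestors t x"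
  by (induction t) auto

lemma ancestors_child: "t \<in> set ts \<Longrightarrow> ancestors t x \<subseteq> ancestors (Node r ts) x"
  by (cases "x \<in> svs t") (auto simp: ancestors_notin)

lemma search_tree_common_ancestor:
  assumes T: "is_search_tree E S (Node r ts)"
    and Z: "connected_in E Z" "Z \<subseteq> S - {r}" "z \<in> Z"
  obtains a where "a \<in> S - {r}" "\<And>x. x \<in> Z \<Longrightarrow> a \<in> ancestors (Node r ts) x"
proof -
  have "component E (S - {r}) z \<in> svs ` set ts"
    using component_in_comps[of z "S - {r}" E] Z(2,3) search_tree_children_comps[OF T] by auto
  then obtain t where t: "t \<in> set ts" "svs t = component E (S - {r}) z" by blast
  obtain a ts' where a: "t = Node a ts'" by (cases t)
  have Z_t: "Z \<subseteq> svs t" using connected_subset_component[OF Z] t(2) by simp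
  have "a \<in> ancestors (Node r ts) x" if "x \<in> Z" for x
  proof -
    have "a \<in> ancestors t x" using Z_t that a by auto
    then show ?thesis using ancestors_child[OF t(1)] by blast
  qed
  moreover have "a \<in> S - {r}" using search_tree_child_subset[OF T t(1)] a by auto
  ultimately show thesis using that by blast
qed

section \<open>Costs of search trees\<close>

lemma sum_depths_Node:
  fixes f :: "'a \<Rightarrow> nat \<Rightarrow> real"
  shows "(\<Sum>(x, d)\<leftarrow>depths (Node r ts). f x d) = f r 1 + (\<Sum>t\<leftarrow>ts. \<Sum>(x, d)\<leftarrow>depths t. f x (Suc d))"
  by (induction ts) (auto simp: o_def split_def)

lemma cost_Node: "cost w (Node r ts) = w r + (\<Sum>t\<leftarrow>ts. cost w t + (\<Sum>(x, d)\<leftarrow>depths t. w x))"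
  unfolding cost_def sum_depths_Node by (simp add: split_def algebra_simps sum_list_addf)

text \<open>The depth of \<open>x\<close> in the search tree that \<open>T\<close> induces on \<open>X\<close> is the number of \<open>T\<close>-ancestors of \<open>x\<close> in \<open>X\<close>.\<close>
definition induced_cost :: "('a \<Rightarrow> real) \<Rightarrow> 'a stree \<Rightarrow> 'a set \<Rightarrow> real" where
  "induced_cost w T X = (\<Sum>x\<in>X \<inter> svs T. w x * real (card (ancestors T x \<inter> X)))"

lemma induced_cost_Int_svs: "induced_cost w T (X \<inter> svs T) = induced_cost w T X"
proof -
  have "ancestors T x \<inter> (X \<inter> svs T) = ancestors T x \<inter> X" for x
    using ancestors_subset[of T x] by blast
  then show ?thesis unfolding induced_cost_def by (simp add: Int_assoc)
qed

lemma induced_cost_superadditive: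
  assumes "A \<inter> B = {}" and "\<And>x. x \<in> (A \<union> B) \<inter> svs T \<Longrightarrow> 0 \<le> w x"
  shows "induced_cost w T A + induced_cost w T B \<le> induced_cost w T (A \<union> B)"
proof -
  have "induced_cost w T (A \<union> B) = (\<Sum>x\<in>A \<inter> svs T. w x * real (card (ancestors T x \<inter> (A \<union> B))))
      + (\<Sum>x\<in>B \<inter> svs T. w x * real (card (ancestors T x \<inter> (A \<union> B))))"
    unfolding induced_cost_def Int_Un_distrib2 by (rule sum.union_disjoint) (use assms(1) in auto)
  moreover have "induced_cost w T A \<le> (\<Sum>x\<in>A \<inter> svs T. w x * real (card (ancestors T x \<inter> (A \<union> B))))"
    "induced_cost w T B \<le> (\<Sum>x\<in>B \<inter> svs T. w x * real (card (ancestors T x \<inter> (A \<union> B))))"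
    unfolding induced_cost_def
    by (intro sum_mono mult_left_mono; auto intro: card_mono assms(2))+
  ultimately show ?thesis by linarith
qed

lemma induced_cost_Diff_split:
  assumes "r \<notin> svs t" "r \<in> K" "K \<subseteq> X" and "\<And>x. x \<in> X \<Longrightarrow> 0 \<le> w x"
  shows "induced_cost w t (K - {r}) + induced_cost w t (X - K) \<le> induced_cost w t X"
proof -
  have "(K - {r}) \<union> (X - K) = X - {r}" using assms(2,3) by blast
  moreover have "induced_cost w t (K - {r}) + induced_cost w t (X - K)
      \<le> induced_cost w t ((K - {r}) \<union> (X - K))"
    using assms(3,4) by (intro induced_cost_superadditive) auto
  ultimately have "induced_cost w t (K - {r}) + induced_cost w t (X - K) \<le> induced_cost w t (X - {r})"
    by simp
  also have "induced_cost w t (X - {r}) = induced_cost w t X"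
  proof -
    have "(X - {r}) \<inter> svs t = X \<inter> svs t" using assms(1) by blast
    then show ?thesis by (metis induced_cost_Int_svs)
  qed
  finally show ?thesis .
qed

lemma OPT_approx:
  assumes "finite S" "S \<noteq> {}" "0 < e"
  obtains T where "is_search_tree E S T" "cost w T < OPT E S w + e"
proof -
  have "{cost w T |T. is_search_tree E S T} \<noteq> {}"
    using search_tree_exists[OF assms(1,2)] by blast
  moreover have "Inf {cost w T |T. is_search_tree E S T} < OPT E S w + e"
    using assms(3) by (simp add: OPT_def)
  ultimately have "\<exists>c\<in>{cost w T |T. is_search_tree E S T}. c < OPT E S w + e"
    by (rule cInf_lessD)
  then show thesis using that by blast
qed

context symmetric_graph
begin

lemma sum_depths_weight: "is_search_tree E S T \<Longrightarrow> (\<Sum>(x, d)\<leftarrow>depths T. w x) = wsum w S"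
proof (induction rule: search_tree_induct)
  case (Node r S ts)
  have "(\<Sum>(x, d)\<leftarrow>depths (Node r ts). w x) = w r + (\<Sum>t\<leftarrow>ts. \<Sum>(x, d)\<leftarrow>depths t. w x)"
    by (rule sum_depths_Node)
  also have "\<dots> = w r + (\<Sum>t\<in>set ts. wsum w (svs t))"
    using Node search_tree_children_distinct[OF Node.hyps] by (simp add: sum_list_distinct_conv_sum_set)
  also have "\<dots> = wsum w S"
    by (rule wsum_search_tree_Node[OF Node.hyps, symmetric])
  finally show ?case .
qed

lemma cost_search_tree_Node:
  assumes T: "is_search_tree E S (Node r ts)"
  shows "cost w (Node r ts) = wsum w S + (\<Sum>t\<in>set ts. cost w t)"
proof -
  have "cost w (Node r ts) = w r + (\<Sum>t\<in>set ts. cost w t + (\<Sum>(x, d)\<leftarrow>depths t. w x))"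
    using search_tree_children_distinct[OF T] by (simp add: cost_Node sum_list_distinct_conv_sum_set)
  also have "\<dots> = w r + (\<Sum>t\<in>set ts. cost w t + wsum w (svs t))"
    using sum_depths_weight[OF search_tree_children[OF T]] by simp
  finally show ?thesis
    using wsum_search_tree_Node[OF T] by (simp add: sum.distrib)
qed

lemma induced_cost_search_tree_Node:
  assumes T: "is_search_tree E S (Node r ts)"
  shows "induced_cost w (Node r ts) X
           = (if r \<in> X then wsum w (X \<inter> S) else 0) + (\<Sum>t\<in>set ts. induced_cost w t X)"
proof -
  have S: "svs (Node r ts) = S" by (rule search_tree_svs[OF T])
  have card_ancestors: "card (ancestors (Node r ts) x \<inter> X)
      = (if r \<in> X then 1 else 0) + (\<Sum>t\<in>set ts. card (ancestors t x \<inter> X))" if x: "x \<in> S" for x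
  proof -
    have "card (\<Union>t\<in>set ts. ancestors t x \<inter> X) = (\<Sum>t\<in>set ts. card (ancestors t x \<inter> X))"
      using search_tree_children_disjoint[OF T] ancestors_subset[of _ x]
      by (intro card_UN_disjoint) (simp_all, blast)
    moreover have "r \<notin> (\<Union>t\<in>set ts. ancestors t x)"
      using search_tree_root_notin_children[OF T] ancestors_subset[of _ x] by blast
    ultimately show ?thesis
      using x S by (auto simp: Int_insert_left)
  qed
  have "induced_cost w (Node r ts) X
      = (\<Sum>x\<in>X \<inter> S. (if r \<in> X then w x else 0) + (\<Sum>t\<in>set ts. w x * real (card (ancestors t x \<inter> X))))"
    unfolding induced_cost_def S
    by (intro sum.cong refl) (simp add: card_ancestors distrib_left sum_distrib_left del: ancestors.simps)
  also have "\<dots> = (if r \<in> X then wsum w (X \<inter> S) else 0)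
      + (\<Sum>t\<in>set ts. \<Sum>x\<in>X \<inter> S. w x * real (card (ancestors t x \<inter> X)))"
    by (simp add: sum.distrib sum.swap[of _ "X \<inter> S"] wsum_def)
  also have "(\<Sum>t\<in>set ts. \<Sum>x\<in>X \<inter> S. w x * real (card (ancestors t x \<inter> X)))
      = (\<Sum>t\<in>set ts. induced_cost w t X)"
    unfolding induced_cost_def
    by (rule sum.cong[OF refl], rule sum.mono_neutral_right)
      (use search_tree_child_subset[OF T] search_tree_finite[OF T] in \<open>auto simp: ancestors_notin\<close>)
  finally show ?thesis .
qed

lemma cost_eq_induced_cost:
  "is_search_tree E S T \<Longrightarrow> cost w T = induced_cost w T S"
proof (induction rule: search_tree_induct)
  case (Node r S ts)
  have "induced_cost w t (svs t) = induced_cost w t S" if "t \<in> set ts" for t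
  proof -
    have "S \<inter> svs t = svs t" using search_tree_child_subset[OF Node.hyps that] by blast
    then show ?thesis using induced_cost_Int_svs[of w t S] by simp
  qed
  then show ?case
    using Node cost_search_tree_Node[OF Node.hyps] search_tree_root[OF Node.hyps]
      induced_cost_search_tree_Node[OF Node.hyps, of w S]
    by simp
qed

lemma OPT_le_cost:
  assumes T: "is_search_tree E S T"
    and nonneg: "\<And>x. x \<in> S \<Longrightarrow> 0 \<le> w x"
  shows "OPT E S w \<le> cost w T"
  unfolding OPT_def
proof (rule cInf_lower)
  show "cost w T \<in> {cost w T |T. is_search_tree E S T}" using T by blast
  have "0 \<le> cost w T'" if "is_search_tree E S T'" for T'
    using cost_eq_induced_cost[OF that] nonneg unfolding induced_cost_def
    by (auto intro: sum_nonneg)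
  then show "bdd_below {cost w T |T. is_search_tree E S T}"
    by (intro bdd_belowI[of _ 0]) blast
qed

text \<open>Hang a near-optimal search tree of every component of \<open>K - {r}\<close> below \<open>r\<close>.\<close>
lemma OPT_le_root:
  assumes K: "finite K" "r \<in> K"
    and nonneg: "\<And>x. x \<in> K \<Longrightarrow> 0 \<le> w x"
  shows "OPT E K w \<le> wsum w K + (\<Sum>K'\<in>comps E (K - {r}). OPT E K' w)"
proof (rule field_le_epsilon)
  fix e :: real assume "0 < e"
  define CC where "CC = comps E (K - {r})"
  define d where "d = e / (real (card CC) + 1)"
  have "0 < d" using \<open>0 < e\<close> by (simp add: d_def)
  have "\<exists>T. is_search_tree E K' T \<and> cost w T < OPT E K' w + d" if "K' \<in> CC" for K'
    using OPT_approx[OF _ _ \<open>0 < d\<close>] comps_subset[OF that[unfolded CC_def]]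
      comps_nonempty[OF that[unfolded CC_def]] K(1) finite_subset
    by (metis Diff_subset subset_trans)
  then obtain f where f: "\<And>K'. K' \<in> CC \<Longrightarrow> is_search_tree E K' (f K') \<and> cost w (f K') < OPT E K' w + d"
    by metis
  obtain Ks where Ks: "distinct Ks" "set Ks = CC" and T: "is_search_tree E K (Node r (map f Ks))"
    using search_tree_NodeI[OF K(2,1), of E f] f unfolding CC_def by blast
  have "OPT E K w \<le> wsum w K + (\<Sum>t\<in>set (map f Ks). cost w t)"
    using OPT_le_cost[OF T nonneg] cost_search_tree_Node[OF T] by simp
  also have "(\<Sum>t\<in>set (map f Ks). cost w t) = (\<Sum>K'\<in>CC. cost w (f K'))"
  proof -
    have "inj_on f CC" using search_tree_children_distinct[OF T] Ks by (simp add: distinct_map)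
    then show ?thesis using Ks(2) by (simp add: sum.reindex)
  qed
  also have "\<dots> \<le> (\<Sum>K'\<in>CC. OPT E K' w + d)"
    using f by (intro sum_mono) (simp add: less_imp_le)
  also have "\<dots> \<le> (\<Sum>K'\<in>CC. OPT E K' w) + e"
  proof -
    have "real (card CC) * d \<le> e"
      using \<open>0 < e\<close> by (simp add: d_def field_simps)
    then show ?thesis by (simp add: sum.distrib)
  qed
  finally show "OPT E K w \<le> wsum w K + (\<Sum>K'\<in>comps E (K - {r}). OPT E K' w) + e"
    by (simp add: CC_def)
qed

lemma sum_comps_le_sum_children:
  assumes T: "is_search_tree E S (Node r ts)" and Y: "Y \<subseteq> S - {r}"
    and le: "\<And>t Y. t \<in> set ts \<Longrightarrow> Y \<subseteq> svs t \<Longrightarrow> (\<Sum>K\<in>comps E Y. g K) \<le> induced_cost w t Y"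
  shows "(\<Sum>K\<in>comps E Y. g K) \<le> (\<Sum>t\<in>set ts. induced_cost w t Y)"
proof -
  have "(\<Sum>K\<in>comps E Y. g K) = (\<Sum>t\<in>set ts. \<Sum>K\<in>comps E (Y \<inter> svs t). g K)"
    by (rule sum_comps_search_tree_children[OF T Y])
  also have "\<dots> \<le> (\<Sum>t\<in>set ts. induced_cost w t (Y \<inter> svs t))"
    using le by (intro sum_mono) blast
  finally show ?thesis by (simp add: induced_cost_Int_svs)
qed

text \<open>If the root \<open>r\<close> of \<open>T\<close> lies in \<open>X\<close>, its component in \<open>X\<close> is searched by querying \<open>r\<close> first;
  everything else is split among the subtrees of \<open>T\<close>.\<close>
lemma sum_OPT_comps_le_induced_cost:
  "is_search_tree E S T \<Longrightarrow> X \<subseteq> S \<Longrightarrow> (\<And>x. x \<in> S \<Longrightarrow> 0 \<le> w x)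
    \<Longrightarrow> (\<Sum>K\<in>comps E X. OPT E K w) \<le> induced_cost w T X"
proof (induction arbitrary: X rule: search_tree_induct)
  case (Node r S ts)
  note T = Node.hyps
  have below_root: "(\<Sum>K\<in>comps E Y. OPT E K w) \<le> (\<Sum>t\<in>set ts. induced_cost w t Y)"
    if "Y \<subseteq> S - {r}" for Y
    using sum_comps_le_sum_children[OF T that] Node.IH Node.prems(2) search_tree_child_subset[OF T]
    by blast
  show ?case
  proof (cases "r \<in> X")
    case False
    then show ?thesis
      using below_root[of X] Node.prems induced_cost_search_tree_Node[OF T] by auto
  next
    case True
    define K where "K = component E X r"
    have K: "K \<in> comps E X" "K \<subseteq> X" "r \<in> K"
      using component_in_comps[OF True] component_subset[OF True] by (auto simp: K_def)
    have fin: "finite X" using search_tree_finite[OF T] Node.prems(1) finite_subset by blast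
    have nonneg: "\<And>x. x \<in> X \<Longrightarrow> 0 \<le> w x" using Node.prems by blast
    have "OPT E K w \<le> wsum w K + (\<Sum>K'\<in>comps E (K - {r}). OPT E K' w)"
      using OPT_le_root[OF finite_subset[OF K(2) fin] K(3)] nonneg K(2) by blast
    moreover have "(\<Sum>K'\<in>comps E (K - {r}). OPT E K' w) \<le> (\<Sum>t\<in>set ts. induced_cost w t (K - {r}))"
      using K(2) Node.prems(1) by (intro below_root) blast
    ultimately have OPT_K: "OPT E K w \<le> wsum w K + (\<Sum>t\<in>set ts. induced_cost w t (K - {r}))"
      by linarith
    have OPT_rest: "(\<Sum>K'\<in>comps E (X - K). OPT E K' w) \<le> (\<Sum>t\<in>set ts. induced_cost w t (X - K))"
      using K(3) Node.prems(1) by (intro below_root) blast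
    have "(\<Sum>t\<in>set ts. induced_cost w t (K - {r})) + (\<Sum>t\<in>set ts. induced_cost w t (X - K))
        \<le> (\<Sum>t\<in>set ts. induced_cost w t X)"
      unfolding sum.distrib[symmetric]
      using search_tree_root_notin_children[OF T] K(2,3) nonneg
      by (intro sum_mono induced_cost_Diff_split) auto
    moreover have "wsum w K \<le> wsum w (X \<inter> S)"
      unfolding wsum_def using Node.prems K fin by (intro sum_mono2) auto
    moreover have "(\<Sum>K'\<in>comps E X. OPT E K' w) = OPT E K w + (\<Sum>K'\<in>comps E (X - K). OPT E K' w)"
      using sum.remove[OF finite_comps[OF fin] K(1)] comps_Diff_comp[OF K(1)] by simp
    ultimately show ?thesis
      using OPT_K OPT_rest True induced_cost_search_tree_Node[OF T] by simp
  qed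
qed

lemma OPT_le_induced_cost:
  assumes "is_search_tree E S T" "H \<subseteq> S" "connected_in E H" "H \<noteq> {}"
    and "\<And>x. x \<in> S \<Longrightarrow> 0 \<le> w x"
  shows "OPT E H w \<le> induced_cost w T H"
  using sum_OPT_comps_le_induced_cost[OF assms(1,2,5)] comps_of_connected[OF assms(3,4)] by simp

end

section \<open>The lower bound at an \<open>\<alpha>\<close>-centroid\<close>

lemma length_le_card_if_distinct: "finite A \<Longrightarrow> set xs \<subseteq> A \<Longrightarrow> distinct xs \<Longrightarrow> length xs \<le> card A"
  by (metis card_mono distinct_card)

definition outside_cost :: "('a \<Rightarrow> real) \<Rightarrow> 'a stree \<Rightarrow> 'a \<Rightarrow> 'a set set \<Rightarrow> real" where
  "outside_cost w T c P = w c * real (card (ancestors T c))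
     + (\<Sum>H\<in>P. \<Sum>x\<in>H. w x * real (card (ancestors T x - H)))"

lemma (in symmetric_graph) cost_eq_induced_cost_plus_outside_cost:
  assumes T: "is_search_tree E V T" and c: "c \<in> V"
  shows "cost w T = (\<Sum>H\<in>comps E (V - {c}). induced_cost w T H) + outside_cost w T c (comps E (V - {c}))"
proof -
  let ?P = "comps E (V - {c})"
  define f where "f x = w x * real (card (ancestors T x))" for x
  have svs: "svs T = V" by (rule search_tree_svs[OF T])
  have fin: "finite V" by (rule search_tree_finite[OF T])
  have "cost w T = (\<Sum>x\<in>V. f x)"
  proof -
    have "ancestors T x \<inter> V = ancestors T x" for x using ancestors_subset[of T x] svs by blast
    then show ?thesis using cost_eq_induced_cost[OF T] svs by (simp add: induced_cost_def f_def)
  qed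
  also have "\<dots> = f c + (\<Sum>H\<in>?P. \<Sum>x\<in>H. f x)"
  proof -
    have "(\<Sum>x\<in>V - {c}. f x) = (\<Sum>H\<in>?P. \<Sum>x\<in>H. f x)"
      using fin comps_subset[of _ E "V - {c}"] comps_disjoint[of _ "V - {c}"]
      by (subst Union_comps[of E "V - {c}", symmetric], subst sum.Union_disjoint) (auto intro: finite_subset)
    then show ?thesis using sum.remove[OF fin c, of f] by simp
  qed
  also have "(\<Sum>H\<in>?P. \<Sum>x\<in>H. f x)
      = (\<Sum>H\<in>?P. induced_cost w T H + (\<Sum>x\<in>H. w x * real (card (ancestors T x - H))))"
  proof (rule sum.cong[OF refl])
    fix H assume H: "H \<in> ?P"
    have "H \<inter> svs T = H" using comps_subset[OF H] svs by blast
    moreover have "card (ancestors T x) = card (ancestors T x \<inter> H) + card (ancestors T x - H)" for x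
      by (rule card_Int_Diff) simp
    ultimately show "(\<Sum>x\<in>H. f x) = induced_cost w T H + (\<Sum>x\<in>H. w x * real (card (ancestors T x - H)))"
      by (simp add: f_def induced_cost_def distrib_left sum.distrib)
  qed
  finally show ?thesis by (simp add: outside_cost_def sum.distrib f_def)
qed

locale centroid_setting = symmetric_graph +
  fixes V :: "'a set" and w :: "'a \<Rightarrow> real" and \<alpha> :: real and c :: 'a
  assumes finite_V: "finite V" and connected_V: "connected_in E V"
    and nonneg: "\<And>x. x \<in> V \<Longrightarrow> 0 \<le> w x"
    and alpha: "1/3 \<le> \<alpha>" "\<alpha> \<le> 1/2"
    and centroid: "is_centroid \<alpha> E V w c"
begin

abbreviation parts :: "'a set set" where
  "parts \<equiv> comps E (V - {c})"

abbreviation lower_bound :: real where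
  "lower_bound \<equiv> (2 - 3 * \<alpha>) * wsum w V + (3 * \<alpha> - 1) * w c"

lemma centroid_in_V: "c \<in> V"
  using centroid by (simp add: is_centroid_def)

lemma wsum_part_le: "H \<in> parts \<Longrightarrow> wsum w H \<le> \<alpha> * wsum w V"
  using centroid by (simp add: is_centroid_def)

lemma sum_wsum_parts: "(\<Sum>H\<in>parts. wsum w H) = wsum w V - w c"
  using sum_wsum_comps[of "V - {c}" w] sum.remove[OF finite_V centroid_in_V, of w] finite_V
  by (simp add: wsum_def)

lemma wsum_parts_nonneg: "0 \<le> wsum w V - w c"
  using nonneg sum_nonneg[of "V - {c}" w] sum.remove[OF finite_V centroid_in_V, of w]
  by (simp add: wsum_def)

lemma outside_cost_ge:
  assumes b: "\<And>H x. H \<in> parts \<Longrightarrow> x \<in> H \<Longrightarrow> b H \<le> real (card (ancestors T x - H))"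
    and k: "k \<le> real (card (ancestors T c))"
  shows "w c * k + (\<Sum>H\<in>parts. b H * wsum w H) \<le> outside_cost w T c parts"
proof -
  have "w c * k \<le> w c * real (card (ancestors T c))"
    using k nonneg[OF centroid_in_V] by (rule mult_left_mono)
  moreover have "b H * wsum w H \<le> (\<Sum>x\<in>H. w x * real (card (ancestors T x - H)))" if H: "H \<in> parts" for H
  proof -
    have "b H * wsum w H = (\<Sum>x\<in>H. w x * b H)"
      by (simp add: wsum_def sum_distrib_left mult.commute)
    also have "\<dots> \<le> (\<Sum>x\<in>H. w x * real (card (ancestors T x - H)))"
      using b[OF H] nonneg comps_subset[OF H] by (intro sum_mono mult_left_mono) auto
    finally show ?thesis .
  qed
  ultimately show ?thesis
    unfolding outside_cost_def by (smt (verit) sum_mono)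
qed

lemma outside_cost_root_centroid:
  assumes T: "is_search_tree E V (Node c ts)"
  shows "lower_bound \<le> outside_cost w (Node c ts) c parts"
proof -
  have c_anc: "c \<in> ancestors (Node c ts) x" if "x \<in> V" for x
    using that search_tree_svs[OF T] by simp
  have "w c * 1 + (\<Sum>H\<in>parts. 1 * wsum w H) \<le> outside_cost w (Node c ts) c parts"
  proof (rule outside_cost_ge)
    fix H x assume H: "H \<in> parts" and "x \<in> H"
    then have "c \<in> ancestors (Node c ts) x - H" using c_anc comps_subset[OF H] by blast
    then have "length [c] \<le> card (ancestors (Node c ts) x - H)"
      by (intro length_le_card_if_distinct) auto
    then show "1 \<le> real (card (ancestors (Node c ts) x - H))" by simp
  next
    have "length [c] \<le> card (ancestors (Node c ts) c)"
      using c_anc[OF centroid_in_V] by (intro length_le_card_if_distinct) auto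
    then show "1 \<le> real (card (ancestors (Node c ts) c))" by simp
  qed
  moreover have "0 \<le> (3 * \<alpha> - 1) * (wsum w V - w c)"
    using alpha wsum_parts_nonneg by simp
  ultimately show ?thesis using sum_wsum_parts by (simp add: algebra_simps)
qed

text \<open>In the next two lemmas the root \<open>r \<noteq> c\<close> lies in the part \<open>H1\<close>, and \<open>a\<close>, the root of the
  subtree containing \<open>c\<close>, is a second common ancestor of \<open>V - H1\<close>.\<close>
lemma outside_cost_second_root_near:
  assumes T: "is_search_tree E V (Node r ts)" and H1: "H1 \<in> parts" "r \<in> H1"
    and a: "a \<in> V - {r}" "\<And>x. x \<in> V - H1 \<Longrightarrow> a \<in> ancestors (Node r ts) x" "a = c \<or> a \<in> H1"
  shows "lower_bound \<le> outside_cost w (Node r ts) c parts"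
proof -
  have r_anc: "r \<in> ancestors (Node r ts) x" if "x \<in> V" for x
    using that search_tree_svs[OF T] by simp
  define b where "b H = (if H = H1 then 0 else 2 :: real)" for H
  have "w c * 2 + (\<Sum>H\<in>parts. b H * wsum w H) \<le> outside_cost w (Node r ts) c parts"
  proof (rule outside_cost_ge)
    fix H x assume H: "H \<in> parts" and x: "x \<in> H"
    show "b H \<le> real (card (ancestors (Node r ts) x - H))"
    proof (cases "H = H1")
      case False
      then have "x \<in> V - H1" "r \<notin> H" "a \<notin> H"
        using x H H1 a(3) comps_subset[OF H] comps_disjoint[OF H H1(1)] by auto
      then have "length [r, a] \<le> card (ancestors (Node r ts) x - H)"
        using r_anc a comps_subset[OF H] x by (intro length_le_card_if_distinct) auto
      then show ?thesis using False by (simp add: b_def)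
    qed (simp add: b_def)
  next
    have "c \<noteq> r" using comps_subset[OF H1(1)] H1(2) by blast
    then have "length [r, c] \<le> card (ancestors (Node r ts) c)"
      using r_anc[OF centroid_in_V] ancestors_self[of c] search_tree_svs[OF T] centroid_in_V
      by (intro length_le_card_if_distinct) auto
    then show "2 \<le> real (card (ancestors (Node r ts) c))" by simp
  qed
  moreover have "(\<Sum>H\<in>parts. b H * wsum w H) = 2 * (wsum w V - w c) - 2 * wsum w H1"
  proof -
    have "(\<Sum>H\<in>parts. b H * wsum w H) = (\<Sum>H\<in>parts. 2 * wsum w H - (if H = H1 then 2 * wsum w H else 0))"
      by (rule sum.cong) (auto simp: b_def)
    then show ?thesis
      using H1(1) finite_V by (simp add: sum_subtractf sum_distrib_left[symmetric] sum_wsum_parts finite_comps)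
  qed
  moreover have "0 \<le> (3 * \<alpha> - 1) * (wsum w V - w c)" "0 \<le> (1 - 2 * \<alpha>) * wsum w V"
    using alpha wsum_parts_nonneg nonneg[OF centroid_in_V] by simp_all
  ultimately show ?thesis using wsum_part_le[OF H1(1)] by (simp add: algebra_simps)
qed

lemma outside_cost_second_root_far:
  assumes T: "is_search_tree E V (Node r ts)" and H1: "H1 \<in> parts" "r \<in> H1"
    and a: "a \<in> V - {r}" "\<And>x. x \<in> V - H1 \<Longrightarrow> a \<in> ancestors (Node r ts) x"
    and H2: "H2 \<in> parts" "a \<in> H2" "H2 \<noteq> H1"
  shows "lower_bound \<le> outside_cost w (Node r ts) c parts"
proof -
  have r_anc: "r \<in> ancestors (Node r ts) x" if "x \<in> V" for x
    using that search_tree_svs[OF T] by simp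
  define b where "b H = (if H = H1 then 0 else if H = H2 then 1 else 2 :: real)" for H
  have "w c * 3 + (\<Sum>H\<in>parts. b H * wsum w H) \<le> outside_cost w (Node r ts) c parts"
  proof (rule outside_cost_ge)
    fix H x assume H: "H \<in> parts" and x: "x \<in> H"
    consider "H = H1" | "H = H2" | "H \<noteq> H1" "H \<noteq> H2" by blast
    then show "b H \<le> real (card (ancestors (Node r ts) x - H))"
    proof cases
      case 2
      then have "r \<in> ancestors (Node r ts) x - H"
        using r_anc x H H1 H2(3) comps_subset[OF H] comps_disjoint[OF H H1(1)] by blast
      then have "length [r] \<le> card (ancestors (Node r ts) x - H)"
        by (intro length_le_card_if_distinct) auto
      then show ?thesis using H2(3) 2 by (simp add: b_def)
    next
      case 3
      then have "x \<in> V - H1" "r \<notin> H" "a \<notin> H"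
        using x H H1 H2 comps_subset[OF H] comps_disjoint[OF H H1(1)] comps_disjoint[OF H H2(1)] by auto
      then have "length [r, a] \<le> card (ancestors (Node r ts) x - H)"
        using r_anc a comps_subset[OF H] x by (intro length_le_card_if_distinct) auto
      then show ?thesis using 3 by (simp add: b_def)
    qed (simp add: b_def)
  next
    have "c \<notin> H1" "c \<noteq> a" using comps_subset[OF H1(1)] comps_subset[OF H2(1)] H2(2) by auto
    moreover have "c \<noteq> r" using \<open>c \<notin> H1\<close> H1(2) by blast
    moreover have "r \<in> ancestors (Node r ts) c" by (rule r_anc[OF centroid_in_V])
    moreover have "a \<in> ancestors (Node r ts) c" using a(2) centroid_in_V \<open>c \<notin> H1\<close> by blast
    moreover have "c \<in> ancestors (Node r ts) c"
      using search_tree_svs[OF T] centroid_in_V by (intro ancestors_self) simp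
    ultimately have "length [r, a, c] \<le> card (ancestors (Node r ts) c)"
      using a(1) by (intro length_le_card_if_distinct) (auto simp del: ancestors.simps)
    then show "3 \<le> real (card (ancestors (Node r ts) c))" by simp
  qed
  moreover have "(\<Sum>H\<in>parts. b H * wsum w H) = 2 * (wsum w V - w c) - 2 * wsum w H1 - wsum w H2"
  proof -
    have "(\<Sum>H\<in>parts. b H * wsum w H) = (\<Sum>H\<in>parts. 2 * wsum w H
        - (if H = H1 then 2 * wsum w H else 0) - (if H = H2 then wsum w H else 0))"
      using H2(3) by (intro sum.cong) (auto simp: b_def)
    then show ?thesis
      using H1(1) H2(1) finite_V
      by (simp add: sum_subtractf sum_distrib_left[symmetric] sum_wsum_parts finite_comps)
  qed
  moreover have "0 \<le> (2 - 3 * \<alpha>) * w c"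
    using alpha nonneg[OF centroid_in_V] by simp
  ultimately show ?thesis
    using wsum_part_le[OF H1(1)] wsum_part_le[OF H2(1)] by (simp add: algebra_simps)
qed

lemma outside_cost_lower_bound:
  assumes T: "is_search_tree E V T"
  shows "lower_bound \<le> outside_cost w T c parts"
proof -
  obtain r ts where T_def: "T = Node r ts" by (cases T)
  show ?thesis
  proof (cases "r = c")
    case True
    then show ?thesis using outside_cost_root_centroid T T_def by simp
  next
    case False
    note T = T[unfolded T_def]
    define H1 where "H1 = component E (V - {c}) r"
    have r: "r \<in> V - {c}" using search_tree_root[OF T] False by blast
    have H1: "H1 \<in> parts" "r \<in> H1" using component_in_comps[OF r] by (simp_all add: H1_def)
    have "connected_in E (V - H1)" "V - H1 \<subseteq> V - {r}" "c \<in> V - H1"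
      using connected_Diff_comps[OF connected_V centroid_in_V H1(1)] H1(2) centroid_in_V
        comps_subset[OF H1(1)] by auto
    then obtain a where a: "a \<in> V - {r}" "\<And>x. x \<in> V - H1 \<Longrightarrow> a \<in> ancestors (Node r ts) x"
      using search_tree_common_ancestor[OF T] by metis
    show ?thesis
    proof (cases "a = c \<or> a \<in> H1")
      case True
      then show ?thesis using outside_cost_second_root_near[OF T H1 a] unfolding T_def by blast
    next
      case False
      define H2 where "H2 = component E (V - {c}) a"
      have "a \<in> V - {c}" using a(1) False by blast
      then have "H2 \<in> parts" "a \<in> H2" "H2 \<noteq> H1"
        using component_in_comps[OF \<open>a \<in> V - {c}\<close>] False by (auto simp: H2_def)
      then show ?thesis using outside_cost_second_root_far[OF T H1 a] unfolding T_def by blast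
    qed
  qed
qed

lemma cost_lower_bound:
  assumes T: "is_search_tree E V T"
  shows "lower_bound + (\<Sum>H\<in>parts. OPT E H w) \<le> cost w T"
proof -
  have "(\<Sum>H\<in>parts. OPT E H w) \<le> (\<Sum>H\<in>parts. induced_cost w T H)"
  proof (rule sum_mono)
    fix H assume H: "H \<in> parts"
    show "OPT E H w \<le> induced_cost w T H"
      using OPT_le_induced_cost[OF T _ comps_connected[OF H] comps_nonempty[OF H]]
        comps_subset[OF H] nonneg by blast
  qed
  then show ?thesis
    using cost_eq_induced_cost_plus_outside_cost[OF T centroid_in_V, of w] outside_cost_lower_bound[OF T]
    by linarith
qed

end

theorem mainTheorem12:
  fixes E :: "'a \<Rightarrow> 'a \<Rightarrow> bool" and V :: "'a set" and w :: "'a \<Rightarrow> real"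
    and \<alpha> :: real and c :: 'a
  assumes sym: "\<And>x y. E x y \<Longrightarrow> E y x"
    and irrefl: "\<And>x. \<not> E x x"
    and tree: "is_tree E V"
    and nonneg: "\<And>x. x \<in> V \<Longrightarrow> w x \<ge> 0"
    and alpha: "1/3 \<le> \<alpha>" "\<alpha> \<le> 1/2"
    and centroid: "is_centroid \<alpha> E V w c"
  shows "OPT E V w \<ge> (2 - 3 * \<alpha>) * wsum w V + (3 * \<alpha> - 1) * w c
           + (\<Sum>H \<in> comps E (V - {c}). OPT E H w)"
proof -
  interpret centroid_setting E V w \<alpha> c
    using assms by unfold_locales (auto simp: is_tree_def)
  have "{cost w T |T. is_search_tree E V T} \<noteq> {}"
    using search_tree_exists[of V E] tree by (auto simp: is_tree_def)
  then have "lower_bound + (\<Sum>H\<in>parts. OPT E H w) \<le> Inf {cost w T |T. is_search_tree E V T}"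
    by (rule cInf_greatest) (auto dest: cost_lower_bound)
  then show ?thesis by (simp add: OPT_def[of E V w])
qed

end
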